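(* Let $V$ be a vector space over $\mathbf k$ regarded as a graded space concentrated in degree $0$. Then Nijenhuis Lie algebra structures $(\mu,P)$ on $V$ are in bijection with Maurer–Cartan elements of the $L_\infty$-algebra $\mathfrak C_{\mathrm{NjL}}(V)$.
   Context: $\mathbf k$ is a field of characteristic $0$; graded spaces are homologically graded. $sV$ is the suspension, $(sV)_n=V_{n-1}$, $s$ of degree $1$. For homogeneous $x_1,\dots,x_n$ and $\sigma\in\mathbb S_n$, $\epsilon(\sigma;x_1,\dots,x_n)$ is defined by $x_1\odot\cdots\odot x_n=\epsilon(\sigma;x)\,x_{\sigma(1)}\odot\cdots\odot x_{\sigma(n)}$ in the graded symmetric algebra, and $\chi(\sigma;x)=\mathrm{sgn}(\sigma)\epsilon(\sigma;x)$. For $i_1+\dots+i_r=N$, $\mathrm{sh}(i_1,\dots,i_r)$ is the set of $\sigma\in\mathbb S_N$ increasing on each consecutive block of sizes $i_1,\dots,i_r$ and with $\sigma(1)<\sigma(i_1+1)<\dots<\sigma(i_1+\dots+i_{r-1}+1)$. Shuffle brace: for $F\in\mathrm{Hom}((sV)^{\otimes m},sV)$, $G_j\in\mathrm{Hom}((sV)^{\otimes k_j},sV)$, $1\le n\le m$, $F\{G_1,\dots,G_n\}:=\sum_{i_1+\dots+i_{n+1}+n=m,\,i_p\ge0}\sum_{\sigma\in\mathrm{sh}(1^{i_1},k_1,1^{i_2},\dots,k_n,1^{i_{n+1}})}(F\circ(\mathrm{id}^{\otimes i_1}\otimes G_1\otimes\mathrm{id}^{\otimes i_2}\otimes\cdots\otimes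 G_n\otimes\mathrm{id}^{\otimes i_{n+1}}))\sigma^{-1}$, where $1^i$ denotes $i$ entries $1$, tensor products of maps obey the Koszul sign rule, and $(H\sigma^{-1})(x_1\otimes\cdots\otimes x_N):=\epsilon(\sigma;x_1,\dots,x_N)H(x_{\sigma(1)}\otimes\cdots\otimes x_{\sigma(N)})$. Maps on $(sV)^{\odot m}$ are identified with $\mathbb S_m$-invariant maps on $(sV)^{\otimes m}$. $[F,H]_{\mathrm{RN}}:=F\{H\}-(-1)^{|F||H|}H\{F\}$. $\mathfrak C_{\mathrm{Lie}}(V)=\prod_{n\ge1}\mathrm{Hom}((sV)^{\odot n},sV)$, $\mathfrak C_{\mathrm{NjO}}(V)=\prod_{n\ge1}\mathrm{Hom}((sV)^{\odot n},V)$, $\mathfrak C_{\mathrm{NjL}}(V)=\mathfrak C_{\mathrm{Lie}}(V)\oplus\mathfrak C_{\mathrm{NjO}}(V)$, graded by degree of maps. For $g\in\mathfrak C_{\mathrm{NjO}}(V)$ put $sg=s\circ g$; elements of $\mathfrak C_{\mathrm{Lie}}(V)$ are written $sh$ with $h=s^{-1}\circ sh$, so $|sh|=|h|+1$. Operations: $l_1=0$; $l_2(sf\otimes sh)=[sf,sh]_{\mathrm{RN}}$; for $sh\in\mathrm{Hom}((sV)^{\odot n},sV)$, $n\ge1$, and $g_1,\dots,g_n\in\mathfrak C_{\mathrm{NjO}}(V)$: $l_{n+1}(sh\otimes g_1\otimes\cdots\otimes g_n)=\sum_{\sigma\in\mathbb S_n}\chi(\sigma;g_1,\dots,g_n)(-1)^{n(|h|+1)+\sum_{p=1}^{n-1}\sum_{j=1}^p|g_{\sigma(j)}|}\sum_{k=0}^n(-1)^{(|h|+1)\sum_{i=1}^k(|g_{\sigma(i)}|+1)+k}s^{-1}\circ\big(sg_{\sigma(1)}\{sg_{\sigma(2)}\{\cdots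 sg_{\sigma(k)}\{sh\{sg_{\sigma(k+1)},\dots,sg_{\sigma(n)}\}\}\cdots\}\}\big)$ (for $k=0$ the term is $s^{-1}\circ sh\{sg_{\sigma(1)},\dots,sg_{\sigma(n)}\}$); $l_{n+1}(g_1\otimes\cdots\otimes g_k\otimes sh\otimes g_{k+1}\otimes\cdots\otimes g_n):=(-1)^{(|h|+1)\sum_{j\le k}|g_j|+k}l_{n+1}(sh\otimes g_1\otimes\cdots\otimes g_n)$; all other components vanish. This is an $L_\infty$-algebra: a graded space with maps $l_n$ of degree $n-2$, graded antisymmetric with respect to $\chi$, satisfying $\sum_{i=1}^n\sum_{\sigma\in\mathrm{Sh}(i,n-i)}\chi(\sigma;x)(-1)^{i(n-i)}l_{n-i+1}(l_i(x_{\sigma(1)},\dots,x_{\sigma(i)}),x_{\sigma(i+1)},\dots,x_{\sigma(n)})=0$ (with $\mathrm{Sh}(i,n-i)$ the $(i,n-i)$-shuffles). A Maurer–Cartan element is $\alpha$ of degree $-1$ with $\sum_{n\ge1}(-1)^{n(n-1)/2}\frac1{n!}l_n(\alpha^{\otimes n})=0$. A Nijenhuis Lie algebra structure on $V$ is a Lie bracket $\mu$ and a linear $P$ with $\mu(Pa,Pb)=P(\mu(Pa,b)+\mu(a,Pb)-P\mu(a,b))$. *)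

theory Defs
  imports Complex_Main "HOL-Combinatorics.Permutations"
begin

text \<open>
  Setting: V is a vector space over a field k of characteristic 0, given by a
  type 'v with a scalar multiplication scale satisfying vector_space scale,
  concentrated in degree 0.  Hence sV is concentrated in degree 1.

  A map F in Hom((sV)^(tensor m), sV) (a component of
  C_Lie) is represented by its arity m together with the function
  Fv :: 'v list => 'v determined by F(s v1 ... s vm) = s (Fv [v1,...,vm]); its degree is 1 - m.
  A map g in Hom((sV)^(tensor m), V) (a component of C_NjO) is represented by
  its arity m and gv with g(s v1 ... s vm) = gv [v1,...,vm]; its degree is - m.
  Then s o g has the same representing function as g, and s^-1 o (sh) the same
  representing function as sh.  All inputs s v_i have degree 1, so Koszul signs
  of permutations of inputs are just signs of permutations.
\<close>

type_synonym 'v rep = "'v list \<Rightarrow> 'v"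
type_synonym ('k, 'v) scalemul = "'k \<Rightarrow> 'v \<Rightarrow> 'v"

definition pm :: "int \<Rightarrow> 'k::field" where
  "pm e = (if even e then 1 else -1)"

text \<open>Plug G_1..G_n into F after i_1, ..., i_n plain inputs (the i_(n+1) rest stay).\<close>
fun asm :: "nat list \<Rightarrow> (nat \<times> 'v rep) list \<Rightarrow> 'v list \<Rightarrow> 'v list" where
  "asm (i # is) ((k, G) # Gs) vs = take i vs @ G (take k (drop i vs)) # asm is Gs (drop (i + k) vs)"
| "asm _ _ vs = vs"

text \<open>Exponent of the Koszul sign of id^i1 (x) G1 (x) ... applied to degree-1 inputs:
  G_j (degree 1 - k_j) passes the p_j inputs before its block.\<close>
fun kexp :: "nat list \<Rightarrow> (nat \<times> 'v rep) list \<Rightarrow> nat \<Rightarrow> nat" where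
  "kexp (i # is) ((k, G) # Gs) p = (k - 1) * (p + i) + kexp is Gs (p + i + k)"
| "kexp _ _ _ = 0"

fun blocks :: "nat list \<Rightarrow> (nat \<times> 'v rep) list \<Rightarrow> nat list" where
  "blocks (i # is) ((k, G) # Gs) = replicate i 1 @ [k] @ blocks is Gs"
| "blocks is [] = concat (map (\<lambda>i. replicate i (1::nat)) is)"
| "blocks [] _ = []"

text \<open>sh(b_1,...,b_r) on {0..<N} (0-based): increasing on each block, and the
  first elements of the blocks increasing.\<close>
definition is_shuffle :: "nat list \<Rightarrow> (nat \<Rightarrow> nat) \<Rightarrow> bool" where
  "is_shuffle bs \<sigma> \<longleftrightarrow> \<sigma> permutes {..<sum_list bs} \<and>
     (\<forall>t<length bs. \<forall>a b. a < b \<and> b < bs ! t \<longrightarrow>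
        \<sigma> (sum_list (take t bs) + a) < \<sigma> (sum_list (take t bs) + b)) \<and>
     (\<forall>t. Suc t < length bs \<longrightarrow> \<sigma> (sum_list (take t bs)) < \<sigma> (sum_list (take (Suc t) bs)))"

text \<open>F{G_1,...,G_n} for F, G_j in C_Lie; (H sigma^-1)(x) = eps(sigma;x) H(x_sigma(1),...)
  with eps = sign sigma since all inputs have degree 1.\<close>
definition brace :: "('k::field, 'v::ab_group_add) scalemul \<Rightarrow> nat \<times> 'v rep \<Rightarrow>
    (nat \<times> 'v rep) list \<Rightarrow> nat \<times> 'v rep" where
  "brace scale F Gs = (let m = fst F; n = length Gs; N = m - n + sum_list (map fst Gs) in
     (N, \<lambda>vs. if n \<le> m \<and> length vs = N then
        (\<Sum>is \<in> {is. length is = Suc n \<and> sum_list is = m - n}.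
          \<Sum>\<sigma> \<in> {\<sigma>. is_shuffle (blocks is Gs) \<sigma>}.
            scale (of_int (sign \<sigma>) * pm (int (kexp is Gs 0)))
              (snd F (asm is Gs (map (\<lambda>t. vs ! \<sigma> t) [0..<N]))))
      else 0))"

text \<open>Richardson--Nijenhuis bracket [F,H] = F{H} - (-1)^(|F||H|) H{F}.\<close>
definition rn :: "('k::field, 'v::ab_group_add) scalemul \<Rightarrow> nat \<times> 'v rep \<Rightarrow> nat \<times> 'v rep \<Rightarrow> nat \<times> 'v rep" where
  "rn scale F H = (let a = brace scale F [H]; b = brace scale H [F] in
     (fst a, \<lambda>vs. snd a vs - scale (pm ((1 - int (fst F)) * (1 - int (fst H)))) (snd b vs)))"

definition eps :: "(nat \<Rightarrow> nat) \<Rightarrow> int list \<Rightarrow> 'k::field" where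
  "eps \<sigma> ds = pm (\<Sum>(s, t) \<in> {(s, t). s < t \<and> t < length ds \<and> \<sigma> t < \<sigma> s}. ds ! \<sigma> s * ds ! \<sigma> t)"

definition chi :: "(nat \<Rightarrow> nat) \<Rightarrow> int list \<Rightarrow> 'k::field" where
  "chi \<sigma> ds = of_int (sign \<sigma>) * eps \<sigma> ds"

text \<open>Homogeneous elements of C_NjL(V): Lie m f is sh in Hom((sV)^m, sV),
  NjO m g is g in Hom((sV)^m, V).\<close>
datatype 'v hel = Lie nat "'v rep" | NjO nat "'v rep"

fun isLie :: "'v hel \<Rightarrow> bool" where
  "isLie (Lie _ _) = True" | "isLie (NjO _ _) = False"

fun hpair :: "'v hel \<Rightarrow> nat \<times> 'v rep" where
  "hpair (Lie m f) = (m, f)" | "hpair (NjO m f) = (m, f)"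

fun hscale :: "('k, 'v) scalemul \<Rightarrow> 'k \<Rightarrow> 'v hel \<Rightarrow> 'v hel" where
  "hscale scale c (Lie m f) = Lie m (\<lambda>vs. scale c (f vs))"
| "hscale scale c (NjO m f) = NjO m (\<lambda>vs. scale c (f vs))"

definition hzero :: "'v::zero hel" where
  "hzero = NjO 0 (\<lambda>_. 0)"

text \<open>l_(n+1)(sh (x) g_1 (x) ... (x) g_n), nonzero only for sh of arity n >= 1.
  |h| = - arity, |g_i| = - arity(g_i).\<close>
definition lbase :: "('k::field, 'v::ab_group_add) scalemul \<Rightarrow> nat \<times> 'v rep \<Rightarrow>
    (nat \<times> 'v rep) list \<Rightarrow> 'v hel" where
  "lbase scale H gs = (let m = fst H; n = length gs; dh = - int m;
      ds = map (\<lambda>g. - int (fst g)) gs; Nout = m - n + sum_list (map fst gs) in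
    if m \<noteq> n \<or> n = 0 then NjO Nout (\<lambda>_. 0) else
    NjO Nout (\<lambda>vs. \<Sum>\<sigma> \<in> {\<sigma>. \<sigma> permutes {..<n}}.
      let gp = map (\<lambda>i. gs ! \<sigma> i) [0..<n];
          c = chi \<sigma> ds * pm (int n * (dh + 1) + (\<Sum>p \<in> {1..<n}. \<Sum>j<p. ds ! \<sigma> j))
      in \<Sum>k \<in> {0..n}. scale (c * pm ((dh + 1) * (\<Sum>i<k. ds ! \<sigma> i + 1) + int k))
            (snd (foldr (\<lambda>g T. brace scale g [T]) (take k gp) (brace scale H (drop k gp))) vs)))"

text \<open>l_n on a list of homogeneous elements.\<close>
definition lmap :: "('k::field, 'v::ab_group_add) scalemul \<Rightarrow> 'v hel list \<Rightarrow> 'v hel" where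
  "lmap scale xs = (let ps = filter (\<lambda>i. isLie (xs ! i)) [0..<length xs] in
     if length xs = 2 \<and> length ps = 2 then
       (case rn scale (hpair (xs ! 0)) (hpair (xs ! 1)) of (N, f) \<Rightarrow> Lie N f)
     else if length xs \<ge> 2 \<and> length ps = 1 then
       (let k = hd ps; H = hpair (xs ! k); gs = map hpair (take k xs @ drop (Suc k) xs) in
         hscale scale (pm ((1 - int (fst H)) * (\<Sum>j<k. - int (fst (gs ! j))) + int k))
           (lbase scale H gs))
     else hzero)"

fun hval :: "bool \<Rightarrow> nat \<Rightarrow> 'v list \<Rightarrow> 'v::zero hel \<Rightarrow> 'v" where
  "hval b m vs (Lie a f) = (if b \<and> a = m then f vs else 0)"
| "hval b m vs (NjO a f) = (if \<not> b \<and> a = m then f vs else 0)"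

text \<open>An element of C_NjL(V) = prod_n Hom((sV)^(odot n), sV) (+) prod_n Hom((sV)^(odot n), V):
  first component = C_Lie part by arity, second = C_NjO part by arity.\<close>
type_synonym 'v cnjl = "(nat \<Rightarrow> 'v rep) \<times> (nat \<Rightarrow> 'v rep)"

text \<open>Multilinear maps on (sV)^(tensor n) that are graded symmetric (inputs of degree 1).\<close>
definition gsym_multilinear :: "('k::field, 'v::ab_group_add) scalemul \<Rightarrow> nat \<Rightarrow> 'v rep \<Rightarrow> bool" where
  "gsym_multilinear scale n f \<longleftrightarrow>
     (\<forall>vs. length vs \<noteq> n \<longrightarrow> f vs = 0) \<and>
     (\<forall>vs i. length vs = n \<and> i < n \<longrightarrow> Vector_Spaces.linear scale scale (\<lambda>x. f (vs[i := x]))) \<and>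
     (\<forall>vs \<sigma>. length vs = n \<and> \<sigma> permutes {..<n} \<longrightarrow>
        f vs = scale (of_int (sign \<sigma>)) (f (permute_list \<sigma> vs)))"

definition cnjl_elem :: "('k::field, 'v::ab_group_add) scalemul \<Rightarrow> int \<Rightarrow> 'v cnjl \<Rightarrow> bool" where
  "cnjl_elem scale d x \<longleftrightarrow> fst x 0 = (\<lambda>_. 0) \<and> snd x 0 = (\<lambda>_. 0) \<and>
     (\<forall>n\<ge>1. gsym_multilinear scale n (fst x n) \<and> (1 - int n \<noteq> d \<longrightarrow> fst x n = (\<lambda>_. 0))) \<and>
     (\<forall>n\<ge>1. gsym_multilinear scale n (snd x n) \<and> (- int n \<noteq> d \<longrightarrow> snd x n = (\<lambda>_. 0)))"

definition hcomps :: "int \<Rightarrow> 'v cnjl \<Rightarrow> 'v hel list" where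
  "hcomps d x = (if 1 - d \<ge> 1 then [Lie (nat (1 - d)) (fst x (nat (1 - d)))] else []) @
                (if - d \<ge> 1 then [NjO (nat (- d)) (snd x (nat (- d)))] else [])"

text \<open>Partial sums sum_(n=1..M) (-1)^(n(n-1)/2) / n! l_n(alpha^(tensor n)), evaluated in the
  arity-m Lie (b) or NjO (not b) component at vs; l_n(alpha,...,alpha) is expanded
  multilinearly over the homogeneous components of alpha.\<close>
definition mc_partial :: "('k::field_char_0, 'v::ab_group_add) scalemul \<Rightarrow> 'v cnjl \<Rightarrow> nat \<Rightarrow>
    bool \<Rightarrow> nat \<Rightarrow> 'v list \<Rightarrow> 'v" where
  "mc_partial scale \<alpha> M b m vs = (\<Sum>n\<in>{1..M}. scale (pm (int (n * (n - 1) div 2)) / fact n)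
     (\<Sum>ws \<in> {ws. length ws = n \<and> set ws \<subseteq> set (hcomps (-1) \<alpha>)}. hval b m vs (lmap scale ws)))"

text \<open>Maurer--Cartan element: degree -1, and the (componentwise, discretely convergent)
  series sum_(n>=1) (-1)^(n(n-1)/2)/n! l_n(alpha^n) vanishes.\<close>
definition MC_element :: "('k::field_char_0, 'v::ab_group_add) scalemul \<Rightarrow> 'v cnjl \<Rightarrow> bool" where
  "MC_element scale \<alpha> \<longleftrightarrow> cnjl_elem scale (-1) \<alpha> \<and>
     (\<forall>b m vs. length vs = m \<longrightarrow> (\<exists>N. \<forall>M\<ge>N. mc_partial scale \<alpha> M b m vs = 0))"

definition lie_bracket :: "('k::field, 'v::ab_group_add) scalemul \<Rightarrow> ('v \<Rightarrow> 'v \<Rightarrow> 'v) \<Rightarrow> bool" where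
  "lie_bracket scale \<mu> \<longleftrightarrow>
     (\<forall>x. Vector_Spaces.linear scale scale (\<mu> x)) \<and>
     (\<forall>y. Vector_Spaces.linear scale scale (\<lambda>x. \<mu> x y)) \<and>
     (\<forall>x. \<mu> x x = 0) \<and>
     (\<forall>x y z. \<mu> x (\<mu> y z) + \<mu> y (\<mu> z x) + \<mu> z (\<mu> x y) = 0)"

definition nijenhuis_lie :: "('k::field, 'v::ab_group_add) scalemul \<Rightarrow> ('v \<Rightarrow> 'v \<Rightarrow> 'v) \<Rightarrow> ('v \<Rightarrow> 'v) \<Rightarrow> bool" where
  "nijenhuis_lie scale \<mu> P \<longleftrightarrow> lie_bracket scale \<mu> \<and> Vector_Spaces.linear scale scale P \<and>
     (\<forall>a b. \<mu> (P a) (P b) = P (\<mu> (P a) b + \<mu> a (P b) - P (\<mu> a b)))"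

text \<open>The degree -1 element (s mu, P) of C_NjL(V): s mu = s o mu o (s^-1 (x) s^-1), whose
  Koszul sign gives s mu(s a, s b) = - s mu(a,b); and P viewed in Hom(sV, V), P(s a) = P a.\<close>
definition NjL_to_cnjl :: "('v::ab_group_add \<Rightarrow> 'v \<Rightarrow> 'v) \<Rightarrow> ('v \<Rightarrow> 'v) \<Rightarrow> 'v cnjl" where
  "NjL_to_cnjl \<mu> P =
     ((\<lambda>n. if n = 2 then (\<lambda>vs. if length vs = 2 then - \<mu> (vs ! 0) (vs ! 1) else 0) else (\<lambda>_. 0)),
      (\<lambda>n. if n = 1 then (\<lambda>vs. if length vs = 1 then P (vs ! 0) else 0) else (\<lambda>_. 0)))"

end

(*
  A Maurer-Cartan element has degree -1, so its only components are a binary map in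
  Hom((sV)^2, sV) and a unary map in Hom(sV, V); graded symmetry and multilinearity make
  them exactly s mu for a skew-symmetric bilinear mu and a linear map P.  Since l_2 only
  pairs two C_Lie elements and l_(n+1)(sh, g_1, ..., g_n) vanishes unless h has arity n,
  the Maurer-Cartan series reduces to -1/2 l_2(s mu, s mu) - 1/6 l_3(alpha, alpha, alpha),
  and the second term is -1/2 l_3(s mu, P, P) by graded symmetry.  Evaluating the shuffle
  braces, these are the Jacobiator of mu and minus the Nijenhuis torsion of P, so the
  Maurer-Cartan equation says exactly that mu is a Lie bracket and P a Nijenhuis operator.
*)

theory Submission
  imports Defs
begin

section \<open>Shuffles, small permutations and words\<close>

lemma permutes_lessThan_increasing_eq_id:
  fixes \<sigma> :: "nat \<Rightarrow> nat"
  assumes perm: "\<sigma> permutes {..<n}" and incr: "\<And>i. Suc i < n \<Longrightarrow> \<sigma> i < \<sigma> (Suc i)"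
  shows "\<sigma> = id"
proof -
  have ge: "i \<le> \<sigma> i" if "i < n" for i
    using that by (induction i) (auto dest: incr)
  have "(\<Sum>i<n. \<sigma> i) = (\<Sum>i<n. i)"
    using sum.permute[OF perm, of id] by simp
  moreover have "(\<Sum>i<n. \<sigma> i - i) = (\<Sum>i<n. \<sigma> i) - (\<Sum>i<n. i)"
    using ge by (intro sum_subtractf_nat) auto
  ultimately have "(\<Sum>i<n. \<sigma> i - i) = 0"
    by simp
  then have "\<sigma> i \<le> i" if "i < n" for i
    using that by simp
  then have "\<sigma> i = i" for i
    using ge permutes_not_in[OF perm, of i] by (cases "i < n") (auto intro: antisym)
  then show ?thesis by auto
qed

lemma shuffles_2: "Collect (is_shuffle [2]) = {id}"
proof -
  have "\<sigma> = id" if "is_shuffle [2] \<sigma>" for \<sigma>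
    using that by (intro permutes_lessThan_increasing_eq_id[of _ 2])
      (auto simp: is_shuffle_def less_Suc_eq numeral_2_eq_2)
  then show ?thesis by (auto simp: is_shuffle_def)
qed

lemma shuffles_1_1: "Collect (is_shuffle [1, 1]) = {id}"
proof -
  have "\<sigma> = id" if "is_shuffle [1, 1] \<sigma>" for \<sigma>
    using that by (intro permutes_lessThan_increasing_eq_id[of _ 2])
      (auto simp: is_shuffle_def less_Suc_eq numeral_2_eq_2)
  then show ?thesis by (auto simp: is_shuffle_def)
qed

lemma shuffles_1_2: "Collect (is_shuffle [1, 2]) = {id}"
proof -
  have "\<sigma> = id" if "is_shuffle [1, 2] \<sigma>" for \<sigma>
    using that by (intro permutes_lessThan_increasing_eq_id[of _ 3])
      (auto simp: is_shuffle_def less_Suc_eq numeral_2_eq_2 numeral_3_eq_3)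
  then show ?thesis by (auto simp: is_shuffle_def)
qed

lemma shuffles_2_1: "Collect (is_shuffle [2, 1]) = {id, transpose 1 2}"
proof -
  have "\<sigma> = id \<or> \<sigma> = transpose 1 2" if "is_shuffle [2, 1] \<sigma>" for \<sigma>
  proof -
    have perm: "\<sigma> permutes {..<3}" and "\<sigma> 0 < \<sigma> 1" "\<sigma> 0 < \<sigma> 2"
      using that by (auto simp: is_shuffle_def less_Suc_eq numeral_2_eq_2 numeral_3_eq_3)
    show ?thesis
    proof (cases "\<sigma> 1 < \<sigma> 2")
      case True
      then have "\<sigma> = id"
        using \<open>\<sigma> 0 < \<sigma> 1\<close> by (intro permutes_lessThan_increasing_eq_id[OF perm])
          (auto simp: less_Suc_eq numeral_2_eq_2 numeral_3_eq_3)
      then show ?thesis ..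
    next
      case False
      then have "\<sigma> 2 < \<sigma> 1"
        using permutes_inj[OF perm] by (auto simp: inj_eq linorder_not_less order_le_less)
      then have "\<sigma> \<circ> transpose 1 2 = id"
        using \<open>\<sigma> 0 < \<sigma> 2\<close>
        by (intro permutes_lessThan_increasing_eq_id[of _ 3] permutes_compose[OF _ perm]
            permutes_swap_id) (auto simp: less_Suc_eq numeral_2_eq_2 numeral_3_eq_3)
      then have "\<sigma> = transpose 1 2"
        by (metis comp_id fun.map_comp transpose_comp_involutory)
      then show ?thesis ..
    qed
  qed
  moreover have "is_shuffle [2, 1] (transpose 1 2)"
    by (auto simp: is_shuffle_def permutes_swap_id less_Suc_eq numeral_2_eq_2 numeral_3_eq_3)
  moreover have "is_shuffle [2, 1] id"
    by (auto simp: is_shuffle_def)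
  ultimately show ?thesis by blast
qed

lemma nat_lists_length_2_sum_1: "{is::nat list. length is = 2 \<and> sum_list is = 1} = {[0, 1], [1, 0]}"
  by (auto simp: length_Suc_conv numeral_2_eq_2)

lemma nat_lists_length_1_sum: "{is::nat list. length is = 1 \<and> sum_list is = k} = {[k]}"
  by (auto simp: length_Suc_conv)

lemma nat_lists_all_zero: "{is::nat list. length is = n \<and> (\<forall>x\<in>set is. x = 0)} = {replicate n 0}"
  by (auto simp: replicate_length_same[symmetric])

lemma sum_lists_length_Suc:
  "(\<Sum>ws | length ws = Suc n \<and> set ws \<subseteq> A. h ws) =
     (\<Sum>x\<in>A. \<Sum>ws | length ws = n \<and> set ws \<subseteq> A. h (x # ws))"
proof -
  have "{ws. length ws = Suc n \<and> set ws \<subseteq> A} =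
      (\<lambda>(ws, x). x # ws) ` ({ws. length ws = n \<and> set ws \<subseteq> A} \<times> A)"
    using lists_length_Suc_eq[of A n] by (simp add: conj_commute)
  moreover have "inj_on (\<lambda>(ws, x). x # ws) ({ws. length ws = n \<and> set ws \<subseteq> A} \<times> A)"
    by (auto simp: inj_on_def)
  ultimately have "(\<Sum>ws | length ws = Suc n \<and> set ws \<subseteq> A. h ws) =
      (\<Sum>ws | length ws = n \<and> set ws \<subseteq> A. \<Sum>x\<in>A. h (x # ws))"
    by (simp add: sum.reindex sum.cartesian_product prod.case_distrib)
  then show ?thesis
    by (rule trans) (rule sum.swap)
qed

lemma sum_lists_length_2:
  "(\<Sum>ws | length ws = 2 \<and> set ws \<subseteq> A. h ws) = (\<Sum>x\<in>A. \<Sum>y\<in>A. h [x, y])"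
proof -
  have "{ws. ws = [] \<and> set ws \<subseteq> A} = {[]}" by auto
  then show ?thesis by (simp add: numeral_2_eq_2 sum_lists_length_Suc)
qed

lemma sum_lists_length_3:
  "(\<Sum>ws | length ws = 3 \<and> set ws \<subseteq> A. h ws) = (\<Sum>x\<in>A. \<Sum>y\<in>A. \<Sum>z\<in>A. h [x, y, z])"
proof -
  have "{ws. ws = [] \<and> set ws \<subseteq> A} = {[]}" by auto
  then show ?thesis by (simp add: numeral_3_eq_3 sum_lists_length_Suc)
qed

lemma sum_id_transpose: "a \<noteq> b \<Longrightarrow> (\<Sum>\<sigma>\<in>{id, transpose a b}. h \<sigma>) = h id + h (transpose a b)"
proof -
  assume "a \<noteq> b"
  then have "id \<noteq> transpose a b" by (metis transpose_eq_id_iff)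
  then show ?thesis by simp
qed

lemma permutes_lessThan_2: "{\<sigma>. \<sigma> permutes {..<2::nat}} = {id, transpose 0 1}"
proof -
  have "{..<2::nat} = {0, 1}" by auto
  then show ?thesis by (auto simp: permutes_doubleton_iff)
qed

section \<open>Shuffle braces and the operations in low arity\<close>

lemma pm_0 [simp]: "pm 0 = 1" and pm_1 [simp]: "pm 1 = -1"
  by (simp_all add: pm_def)

lemma eps_id: "eps id ds = 1"
proof -
  have "{(s, t). s < t \<and> t < length ds \<and> id t < id s} = {}" by auto
  then show ?thesis by (simp only: eps_def) simp
qed

lemma eps_transpose_0_1: "eps (transpose 0 1) [a, b] = pm (b * a)"
proof -
  have "{(s, t). s < t \<and> t < length [a, b] \<and> transpose (0::nat) 1 t < transpose 0 1 s} = {(0, 1)}"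
    by (auto simp: transpose_def)
  then show ?thesis by (simp add: eps_def)
qed

lemma lmap_Lie_Lie: "lmap scale [Lie m f, Lie n g] = (case rn scale (m, f) (n, g) of (N, h) \<Rightarrow> Lie N h)"
  by (simp add: lmap_def upt_rec)

context vector_space
begin

lemma scale_2: "2 *s x = x + x"
  using scale_left_distrib[of 1 1 x] by simp

lemma scale_3: "3 *s x = x + (x + x)"
  using scale_left_distrib[of 1 2 x] by (simp add: scale_2)

lemma brace_binary_binary:
  "brace scale (2, f) [(2, g)] = (3, \<lambda>vs. if length vs = 3 then
     f [g [vs!0, vs!1], vs!2] - f [g [vs!0, vs!2], vs!1] - f [vs!0, g [vs!1, vs!2]] else 0)"
  by (simp add: brace_def Let_def nat_lists_length_2_sum_1[unfolded numeral_2_eq_2 One_nat_def]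
      shuffles_2_1[unfolded One_nat_def] shuffles_1_2[unfolded One_nat_def] sign_swap_id
      sum_id_transpose transpose_def fun_eq_iff)
    (simp add: numeral_2_eq_2)

lemma brace_binary_unary:
  "brace scale (2, f) [(1, p)] = (2, \<lambda>vs. if length vs = 2 then f [p [vs!0], vs!1] + f [vs!0, p [vs!1]] else 0)"
  by (simp add: brace_def Let_def nat_lists_length_2_sum_1[unfolded numeral_2_eq_2 One_nat_def]
      shuffles_1_1[unfolded One_nat_def] fun_eq_iff)

lemma brace_binary_unary_unary:
  "brace scale (2, f) [(1, p), (1, q)] = (2, \<lambda>vs. if length vs = 2 then f [p [vs!0], q [vs!1]] else 0)"
  by (simp add: brace_def Let_def nat_lists_all_zero shuffles_1_1[unfolded One_nat_def] fun_eq_iff)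

lemma brace_unary_binary:
  "brace scale (1, p) [(2, g)] = (2, \<lambda>vs. if length vs = 2 then p [g [vs!0, vs!1]] else 0)"
  by (simp add: brace_def Let_def nat_lists_all_zero shuffles_2 fun_eq_iff)

lemma brace_binary_Nil:
  "brace scale (2, f) [] = (2, \<lambda>vs. if length vs = 2 then f [vs!0, vs!1] else 0)"
  by (simp add: brace_def Let_def nat_lists_length_1_sum[unfolded One_nat_def] fun_eq_iff)
    (simp add: shuffles_1_1[unfolded One_nat_def] numeral_2_eq_2)

lemma rn_binary_self:
  "rn scale (2, f) (2, f) = (3, \<lambda>vs. if length vs = 3 then
     2 *s (f [f [vs!0, vs!1], vs!2] - f [f [vs!0, vs!2], vs!1] - f [vs!0, f [vs!1, vs!2]]) else 0)"
  by (simp add: rn_def brace_binary_binary fun_eq_iff scale_2)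

lemma lbase_binary_unary_unary:
  "lbase scale (2, f) [(1, p), (1, p)] = NjO 2 (\<lambda>vs. if length vs = 2 then
     (-2) *s (f [p [vs!0], p [vs!1]] - p [f [p [vs!0], vs!1] + f [vs!0, p [vs!1]]] + p [p [f [vs!0, vs!1]]])
     else 0)"
  by (simp add: lbase_def Let_def permutes_lessThan_2[unfolded numeral_2_eq_2] sum_id_transpose
        chi_def eps_id eps_transpose_0_1[unfolded One_nat_def] sign_swap_id pm_def scale_2 fun_eq_iff
        brace_binary_unary_unary[unfolded One_nat_def] brace_binary_unary[unfolded One_nat_def]
        brace_unary_binary[unfolded One_nat_def] brace_binary_Nil)

lemma hscale_one: "hscale scale 1 x = x"
  by (cases x) simp_all

lemma lmap_one_Lie_two_NjO:
  "lmap scale [Lie 2 f, NjO 1 g, NjO 1 g] = lbase scale (2, f) [(1, g), (1, g)]"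
  "lmap scale [NjO 1 g, Lie 2 f, NjO 1 g] = lbase scale (2, f) [(1, g), (1, g)]"
  "lmap scale [NjO 1 g, NjO 1 g, Lie 2 f] = lbase scale (2, f) [(1, g), (1, g)]"
  by (simp_all add: lmap_def upt_rec pm_def hscale_one)

lemma hval_lmap_length_2_eq_0:
  "hval b m vs (lmap scale [Lie 2 f, NjO 1 g]) = 0"
  "hval b m vs (lmap scale [NjO 1 g, Lie 2 f]) = 0"
  "hval b m vs (lmap scale [NjO 1 g, NjO 1 g]) = 0"
  by (simp_all add: lmap_def upt_rec lbase_def hzero_def)

lemma hval_lmap_length_3_eq_0:
  "hval b m vs (lmap scale [Lie 2 f, Lie 2 f, Lie 2 f]) = 0"
  "hval b m vs (lmap scale [Lie 2 f, Lie 2 f, NjO 1 g]) = 0"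
  "hval b m vs (lmap scale [Lie 2 f, NjO 1 g, Lie 2 f]) = 0"
  "hval b m vs (lmap scale [NjO 1 g, Lie 2 f, Lie 2 f]) = 0"
  "hval b m vs (lmap scale [NjO 1 g, NjO 1 g, NjO 1 g]) = 0"
  by (simp_all add: lmap_def upt_rec hzero_def)

lemma hval_lmap_eq_0_if_length:
  assumes ws: "set ws \<subseteq> {Lie 2 f, NjO 1 g}" and len: "length ws \<notin> {2, 3}"
  shows "hval b m vs (lmap scale ws) = 0"
proof -
  define ps where "ps = filter (\<lambda>i. isLie (ws ! i)) [0..<length ws]"
  show ?thesis
  proof (cases "length ps = 1")
    case True
    then have "hd ps \<in> set ps" by (cases ps) auto
    then have k: "hd ps < length ws" "isLie (ws ! hd ps)"
      unfolding ps_def by auto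
    moreover have "ws ! hd ps \<in> {Lie 2 f, NjO 1 g}"
      using ws k(1) by (meson nth_mem subsetD)
    ultimately have "ws ! hd ps = Lie 2 f"
      by auto
    moreover have "length (take (hd ps) ws @ drop (Suc (hd ps)) ws) \<noteq> 2"
      using k len by auto
    ultimately show ?thesis
      using len unfolding lmap_def Let_def ps_def[symmetric] by (simp add: lbase_def hzero_def)
  next
    case False
    then show ?thesis
      using len unfolding lmap_def Let_def ps_def[symmetric] by (auto simp: hzero_def)
  qed
qed

end

section \<open>The Maurer--Cartan series in degree -1\<close>

lemma mc_partial_truncation:
  fixes scale :: "'k::field_char_0 \<Rightarrow> 'v::ab_group_add \<Rightarrow> 'v"
    and \<alpha> :: "'v cnjl"
  assumes "vector_space scale" and "3 \<le> M"
  defines "f \<equiv> fst \<alpha> 2" and "g \<equiv> snd \<alpha> 1"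
  shows "mc_partial scale \<alpha> M b m vs = scale (-1/2)
    (hval b m vs (lmap scale [Lie 2 f, Lie 2 f]) + hval b m vs (lbase scale (2, f) [(1, g), (1, g)]))"
proof -
  interpret vector_space scale by fact
  define t where "t n = scale (pm (int (n * (n - 1) div 2)) / fact n)
     (\<Sum>ws | length ws = n \<and> set ws \<subseteq> {Lie 2 f, NjO 1 g}. hval b m vs (lmap scale ws))" for n
  have t_vanish: "t n = 0" if "n \<notin> {2, 3}" for n
  proof -
    have "(\<Sum>ws | length ws = n \<and> set ws \<subseteq> {Lie 2 f, NjO 1 g}. hval b m vs (lmap scale ws)) = 0"
      using that by (intro sum.neutral ballI hval_lmap_eq_0_if_length) auto
    then show ?thesis by (simp add: t_def)
  qed
  have "mc_partial scale \<alpha> M b m vs = sum t {1..M}"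
    by (simp add: mc_partial_def t_def hcomps_def f_def g_def)
  also have "\<dots> = sum t {2, 3}"
    using \<open>3 \<le> M\<close> t_vanish by (intro sum.mono_neutral_right) auto
  also have "\<dots> = t 2 + t 3"
    by simp
  also have "t 2 = scale (-1/2) (hval b m vs (lmap scale [Lie 2 f, Lie 2 f]))"
    by (simp add: t_def sum_lists_length_2 hval_lmap_length_2_eq_0 del: One_nat_def)
  also have "t 3 = scale (-1/2) (hval b m vs (lbase scale (2, f) [(1, g), (1, g)]))"
    \<comment> \<open>the coefficient is -1/6, and the three words with a single Lie 2 f contribute equally\<close>
    by (simp add: t_def sum_lists_length_3 hval_lmap_length_3_eq_0 lmap_one_Lie_two_NjO
        scale_3[symmetric] pm_def fact_numeral del: One_nat_def)
  finally show ?thesis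
    by (simp add: scale_right_distrib)
qed

section \<open>Degree -1 elements and Nijenhuis Lie algebras\<close>

lemma length_2_nth_eq: "length xs = 2 \<Longrightarrow> [xs ! 0, xs ! 1] = xs"
  by (auto simp: length_Suc_conv numeral_2_eq_2)

lemma length_1_nth_eq: "length xs = 1 \<Longrightarrow> [xs ! 0] = xs"
  by (auto simp: length_Suc_conv)

definition jacobiator :: "('v::ab_group_add \<Rightarrow> 'v \<Rightarrow> 'v) \<Rightarrow> 'v \<Rightarrow> 'v \<Rightarrow> 'v \<Rightarrow> 'v" where
  "jacobiator \<mu> x y z = \<mu> x (\<mu> y z) + \<mu> y (\<mu> z x) + \<mu> z (\<mu> x y)"

definition nijenhuis_torsion :: "('v::ab_group_add \<Rightarrow> 'v \<Rightarrow> 'v) \<Rightarrow> ('v \<Rightarrow> 'v) \<Rightarrow> 'v \<Rightarrow> 'v \<Rightarrow> 'v" where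
  "nijenhuis_torsion \<mu> P a b = \<mu> (P a) (P b) - P (\<mu> (P a) b + \<mu> a (P b) - P (\<mu> a b))"

definition skew_bilinear :: "('k::field \<Rightarrow> 'v::ab_group_add \<Rightarrow> 'v) \<Rightarrow> ('v \<Rightarrow> 'v \<Rightarrow> 'v) \<Rightarrow> bool" where
  "skew_bilinear scale \<mu> \<longleftrightarrow>
     (\<forall>x. Vector_Spaces.linear scale scale (\<mu> x)) \<and>
     (\<forall>y. Vector_Spaces.linear scale scale (\<lambda>x. \<mu> x y)) \<and>
     (\<forall>x y. \<mu> x y = - \<mu> y x)"

context vector_space
begin

lemma skew_bilinear_minus:
  assumes "skew_bilinear scale \<mu>"
  shows "\<mu> (- a) b = - \<mu> a b" and "\<mu> a (- b) = - \<mu> a b"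
proof -
  interpret pair: vector_space_pair scale scale ..
  have "Vector_Spaces.linear scale scale (\<lambda>x. \<mu> x b)" "Vector_Spaces.linear scale scale (\<mu> a)"
    using assms unfolding skew_bilinear_def by blast+
  from pair.linear_neg[OF this(1)] pair.linear_neg[OF this(2)]
  show "\<mu> (- a) b = - \<mu> a b" and "\<mu> a (- b) = - \<mu> a b"
    by simp_all
qed

lemma linear_uminus_iff:
  "Vector_Spaces.linear scale scale (\<lambda>x. - h x) \<longleftrightarrow> Vector_Spaces.linear scale scale h"
proof -
  interpret pair: vector_space_pair scale scale ..
  show ?thesis
  proof
    assume "Vector_Spaces.linear scale scale (\<lambda>x. - h x)"
    from pair.linear_compose_neg[OF this] show "Vector_Spaces.linear scale scale h"
      by simp
  qed (rule pair.linear_compose_neg)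
qed

lemma skew_bilinear_uminus: "skew_bilinear scale (\<lambda>x y. - \<mu> x y) \<longleftrightarrow> skew_bilinear scale \<mu>"
  unfolding skew_bilinear_def linear_uminus_iff by (metis minus_minus)

lemma gsym_multilinear_zero: "gsym_multilinear scale n (\<lambda>_. 0)"
proof -
  interpret pair: vector_space_pair scale scale ..
  show ?thesis
    by (simp add: gsym_multilinear_def pair.linear_zero)
qed

lemma gsym_multilinearI:
  assumes "\<And>vs. length vs \<noteq> n \<Longrightarrow> f vs = 0"
    and "\<And>vs i. length vs = n \<Longrightarrow> i < n \<Longrightarrow> Vector_Spaces.linear scale scale (\<lambda>x. f (vs[i := x]))"
    and "\<And>vs \<sigma>. length vs = n \<Longrightarrow> \<sigma> permutes {..<n} \<Longrightarrow>
      f vs = of_int (sign \<sigma>) *s f (permute_list \<sigma> vs)"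
  shows "gsym_multilinear scale n f"
  unfolding gsym_multilinear_def
  by (intro conjI allI impI; (elim conjE)?; rule assms; assumption)

lemma gsym_multilinearD:
  assumes "gsym_multilinear scale n f"
  shows "length vs \<noteq> n \<Longrightarrow> f vs = 0"
    and "length vs = n \<Longrightarrow> i < n \<Longrightarrow> Vector_Spaces.linear scale scale (\<lambda>x. f (vs[i := x]))"
    and "length vs = n \<Longrightarrow> \<sigma> permutes {..<n} \<Longrightarrow>
      f vs = of_int (sign \<sigma>) *s f (permute_list \<sigma> vs)"
proof -
  note G = assms[unfolded gsym_multilinear_def]
  show "length vs \<noteq> n \<Longrightarrow> f vs = 0"
    by (rule G[THEN conjunct1, rule_format])
  show "length vs = n \<Longrightarrow> i < n \<Longrightarrow> Vector_Spaces.linear scale scale (\<lambda>x. f (vs[i := x]))"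
    by (intro G[THEN conjunct2, THEN conjunct1, rule_format] conjI)
  show "length vs = n \<Longrightarrow> \<sigma> permutes {..<n} \<Longrightarrow>
      f vs = of_int (sign \<sigma>) *s f (permute_list \<sigma> vs)"
    by (intro G[THEN conjunct2, THEN conjunct2, rule_format] conjI)
qed

lemma gsym_multilinear_1_iff:
  "gsym_multilinear scale 1 f \<longleftrightarrow>
     Vector_Spaces.linear scale scale (\<lambda>x. f [x]) \<and> (\<forall>vs. length vs \<noteq> 1 \<longrightarrow> f vs = 0)"
proof -
  have update: "vs[i := x] = [x]" if "length vs = 1" "i < 1" for vs :: "'b list" and i x
    using that by (auto simp: length_Suc_conv)
  show ?thesis
  proof
    assume "gsym_multilinear scale 1 f"
    from gsym_multilinearD(2)[OF this, of "[0]" 0] gsym_multilinearD(1)[OF this]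
    show "Vector_Spaces.linear scale scale (\<lambda>x. f [x]) \<and> (\<forall>vs. length vs \<noteq> 1 \<longrightarrow> f vs = 0)"
      by simp
  next
    assume L: "Vector_Spaces.linear scale scale (\<lambda>x. f [x]) \<and> (\<forall>vs. length vs \<noteq> 1 \<longrightarrow> f vs = 0)"
    show "gsym_multilinear scale 1 f"
    proof (rule gsym_multilinearI)
      fix vs :: "'b list" and \<sigma> :: "nat \<Rightarrow> nat" assume "\<sigma> permutes {..<1}"
      then have "\<sigma> = id"
        by (simp add: lessThan_Suc)
      then show "f vs = of_int (sign \<sigma>) *s f (permute_list \<sigma> vs)"
        by simp
    qed (use L update in auto)
  qed
qed

lemma gsym_multilinear_2_iff:
  "gsym_multilinear scale 2 f \<longleftrightarrow>
     skew_bilinear scale (\<lambda>x y. f [x, y]) \<and> (\<forall>vs. length vs \<noteq> 2 \<longrightarrow> f vs = 0)"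
proof -
  have pairs: "\<exists>a b. vs = [a, b]" if "length vs = 2" for vs :: "'b list"
    using that by (auto simp: length_Suc_conv numeral_2_eq_2)
  have swap: "permute_list (transpose 0 1) [a, b] = [b, a]" for a b :: 'b
    by (simp add: permute_list_def transpose_def)
  show ?thesis
  proof
    assume G: "gsym_multilinear scale 2 f"
    have "Vector_Spaces.linear scale scale (\<lambda>y. f [x, y])" for x
      using gsym_multilinearD(2)[OF G, of "[x, 0]" 1] by simp
    moreover have "Vector_Spaces.linear scale scale (\<lambda>x. f [x, y])" for y
      using gsym_multilinearD(2)[OF G, of "[0, y]" 0] by simp
    moreover have "f [x, y] = - f [y, x]" for x y
      using gsym_multilinearD(3)[OF G, of "[x, y]" "transpose 0 1"]
      by (simp add: swap[unfolded One_nat_def] sign_swap_id permutes_swap_id)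
    ultimately have "skew_bilinear scale (\<lambda>x y. f [x, y])"
      unfolding skew_bilinear_def by iprover
    with gsym_multilinearD(1)[OF G]
    show "skew_bilinear scale (\<lambda>x y. f [x, y]) \<and> (\<forall>vs. length vs \<noteq> 2 \<longrightarrow> f vs = 0)"
      by blast
  next
    assume "skew_bilinear scale (\<lambda>x y. f [x, y]) \<and> (\<forall>vs. length vs \<noteq> 2 \<longrightarrow> f vs = 0)"
    then have linear_right: "\<And>x. Vector_Spaces.linear scale scale (\<lambda>y. f [x, y])"
      and linear_left: "\<And>y. Vector_Spaces.linear scale scale (\<lambda>x. f [x, y])"
      and antisym: "\<And>x y. f [x, y] = - f [y, x]"
      and zero: "\<And>vs. length vs \<noteq> 2 \<Longrightarrow> f vs = 0"
      unfolding skew_bilinear_def by iprover+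
    show "gsym_multilinear scale 2 f"
    proof (rule gsym_multilinearI)
      fix vs :: "'b list" and i :: nat assume "length vs = 2" "i < 2"
      moreover obtain a b where "vs = [a, b]" using pairs \<open>length vs = 2\<close> by blast
      moreover have "i = 0 \<or> i = 1" using \<open>i < 2\<close> by arith
      ultimately show "Vector_Spaces.linear scale scale (\<lambda>x. f (vs[i := x]))"
        using linear_left linear_right by (elim disjE) simp_all
    next
      fix vs :: "'b list" and \<sigma> :: "nat \<Rightarrow> nat" assume "length vs = 2" "\<sigma> permutes {..<2}"
      moreover obtain a b where "vs = [a, b]" using pairs \<open>length vs = 2\<close> by blast
      moreover have "\<sigma> = id \<or> \<sigma> = transpose 0 1"
        using \<open>\<sigma> permutes {..<2}\<close> permutes_lessThan_2 by blast
      ultimately show "f vs = of_int (sign \<sigma>) *s f (permute_list \<sigma> vs)"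
        using antisym[of a b] by (elim disjE) (simp_all add: swap[unfolded One_nat_def] sign_swap_id)
    qed (rule zero)
  qed
qed

lemma cnjl_elem_minus_1_iff:
  "cnjl_elem scale (-1) \<alpha> \<longleftrightarrow>
     (\<exists>\<mu> P. skew_bilinear scale \<mu> \<and> Vector_Spaces.linear scale scale P \<and> \<alpha> = NjL_to_cnjl \<mu> P)"
proof
  assume "\<exists>\<mu> P. skew_bilinear scale \<mu> \<and> Vector_Spaces.linear scale scale P \<and> \<alpha> = NjL_to_cnjl \<mu> P"
  then obtain \<mu> P where skew: "skew_bilinear scale \<mu>" and linear: "Vector_Spaces.linear scale scale P"
    and \<alpha>: "\<alpha> = NjL_to_cnjl \<mu> P"
    by blast
  have "gsym_multilinear scale 2 (\<lambda>vs. if length vs = 2 then - \<mu> (vs ! 0) (vs ! 1) else 0)"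
    by (simp add: gsym_multilinear_2_iff skew_bilinear_uminus skew)
  moreover have "gsym_multilinear scale 1 (\<lambda>vs. if length vs = 1 then P (vs ! 0) else 0)"
    by (subst gsym_multilinear_1_iff) (simp add: linear)
  ultimately show "cnjl_elem scale (-1) \<alpha>"
    unfolding cnjl_elem_def \<alpha> NjL_to_cnjl_def by (auto simp: gsym_multilinear_zero)
next
  assume "cnjl_elem scale (-1) \<alpha>"
  then have zero: "fst \<alpha> 0 = (\<lambda>_. 0)" "snd \<alpha> 0 = (\<lambda>_. 0)"
    and fst_\<alpha>: "\<And>n. n \<ge> 1 \<Longrightarrow> gsym_multilinear scale n (fst \<alpha> n) \<and> (1 - int n \<noteq> -1 \<longrightarrow> fst \<alpha> n = (\<lambda>_. 0))"
    and snd_\<alpha>: "\<And>n. n \<ge> 1 \<Longrightarrow> gsym_multilinear scale n (snd \<alpha> n) \<and> (- int n \<noteq> -1 \<longrightarrow> snd \<alpha> n = (\<lambda>_. 0))"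
    unfolding cnjl_elem_def by iprover+
  define \<mu> where "\<mu> = (\<lambda>x y. - fst \<alpha> 2 [x, y])"
  define P where "P = (\<lambda>x. snd \<alpha> 1 [x])"
  have fst_2: "gsym_multilinear scale 2 (fst \<alpha> 2)" and snd_1: "gsym_multilinear scale 1 (snd \<alpha> 1)"
    using fst_\<alpha>[of 2] snd_\<alpha>[of 1] by simp_all
  have "skew_bilinear scale \<mu>"
    using fst_2 by (simp add: gsym_multilinear_2_iff \<mu>_def skew_bilinear_uminus)
  moreover have "Vector_Spaces.linear scale scale P"
    using snd_1 unfolding gsym_multilinear_1_iff P_def by simp
  moreover have "fst \<alpha> n = fst (NjL_to_cnjl \<mu> P) n" for n
  proof -
    have "fst \<alpha> 2 vs = (if length vs = 2 then - \<mu> (vs ! 0) (vs ! 1) else 0)" for vs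
      using gsym_multilinearD(1)[OF fst_2, of vs] length_2_nth_eq[of vs] by (auto simp: \<mu>_def)
    then show ?thesis
      using zero fst_\<alpha>[of n] by (cases "n = 0") (auto simp: NjL_to_cnjl_def)
  qed
  moreover have "snd \<alpha> n = snd (NjL_to_cnjl \<mu> P) n" for n
  proof -
    have "snd \<alpha> 1 vs = (if length vs = 1 then P (vs ! 0) else 0)" for vs
      using gsym_multilinearD(1)[OF snd_1, of vs] length_1_nth_eq[of vs] by (auto simp: P_def)
    then show ?thesis
      using zero snd_\<alpha>[of n] by (cases "n = 0") (auto simp: NjL_to_cnjl_def)
  qed
  ultimately show "\<exists>\<mu> P. skew_bilinear scale \<mu> \<and> Vector_Spaces.linear scale scale P \<and> \<alpha> = NjL_to_cnjl \<mu> P"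
    by (metis prod_eqI ext)
qed

lemma NjL_to_cnjl_self_brace:
  fixes \<mu> :: "'b \<Rightarrow> 'b \<Rightarrow> 'b" and P :: "'b \<Rightarrow> 'b"
  assumes skew: "skew_bilinear scale \<mu>"
  defines "F \<equiv> fst (NjL_to_cnjl \<mu> P) 2"
  shows "F [F [x, y], z] - F [F [x, z], y] - F [x, F [y, z]] = - jacobiator \<mu> x y z"
proof -
  have F: "F [a, b] = - \<mu> a b" for a b
    by (simp add: F_def NjL_to_cnjl_def)
  have antisym: "\<And>a b. \<mu> a b = - \<mu> b a"
    using skew unfolding skew_bilinear_def by iprover
  have "\<mu> (\<mu> x y) z = - \<mu> z (\<mu> x y)" and "\<mu> (\<mu> x z) y = \<mu> y (\<mu> z x)"
    using antisym[of "\<mu> x y" z] antisym[of "\<mu> x z" y] antisym[of x z] skew_bilinear_minus[OF skew]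
    by simp_all
  then show ?thesis
    by (simp add: F skew_bilinear_minus[OF skew] jacobiator_def algebra_simps)
qed

lemma NjL_to_cnjl_nijenhuis_torsion:
  fixes \<mu> :: "'b \<Rightarrow> 'b \<Rightarrow> 'b" and P :: "'b \<Rightarrow> 'b"
  assumes linear: "Vector_Spaces.linear scale scale P"
  defines "F \<equiv> fst (NjL_to_cnjl \<mu> P) 2" and "p \<equiv> snd (NjL_to_cnjl \<mu> P) 1"
  shows "F [p [a], p [b]] - p [F [p [a], b] + F [a, p [b]]] + p [p [F [a, b]]] = - nijenhuis_torsion \<mu> P a b"
proof -
  interpret pair: vector_space_pair scale scale ..
  have "F [x, y] = - \<mu> x y" and "p [x] = P x" for x y
    by (simp_all add: F_def p_def NjL_to_cnjl_def)
  then show ?thesis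
    by (simp add: nijenhuis_torsion_def pair.linear_neg[OF linear] pair.linear_add[OF linear]
        pair.linear_diff[OF linear] algebra_simps)
qed

end

lemma mc_partial_NjL_to_cnjl:
  fixes scale :: "'k::field_char_0 \<Rightarrow> 'v::ab_group_add \<Rightarrow> 'v"
  assumes "vector_space scale" and skew: "skew_bilinear scale \<mu>"
    and linear: "Vector_Spaces.linear scale scale P" and "3 \<le> M"
  shows "mc_partial scale (NjL_to_cnjl \<mu> P) M b m vs =
    (if b \<and> m = 3 \<and> length vs = 3 then jacobiator \<mu> (vs ! 0) (vs ! 1) (vs ! 2) else 0) -
    (if \<not> b \<and> m = 2 \<and> length vs = 2 then nijenhuis_torsion \<mu> P (vs ! 0) (vs ! 1) else 0)"
proof -
  interpret vector_space scale by fact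
  define F where "F = fst (NjL_to_cnjl \<mu> P) 2"
  define p where "p = snd (NjL_to_cnjl \<mu> P) 1"
  have "hval b m vs (lmap scale [Lie 2 F, Lie 2 F]) =
      (if b \<and> m = 3 \<and> length vs = 3 then scale 2 (- jacobiator \<mu> (vs ! 0) (vs ! 1) (vs ! 2)) else 0)"
    using NjL_to_cnjl_self_brace[OF skew, of P, folded F_def]
    by (simp add: lmap_Lie_Lie rn_binary_self)
  moreover have "hval b m vs (lbase scale (2, F) [(1, p), (1, p)]) =
      (if \<not> b \<and> m = 2 \<and> length vs = 2 then scale (-2) (- nijenhuis_torsion \<mu> P (vs ! 0) (vs ! 1)) else 0)"
    using NjL_to_cnjl_nijenhuis_torsion[OF linear, of \<mu>, folded F_def p_def]
    by (simp add: lbase_binary_unary_unary del: One_nat_def)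
  ultimately show ?thesis
    using mc_partial_truncation[OF assms(1,4), of "NjL_to_cnjl \<mu> P" b m vs, folded F_def p_def]
    by (simp add: scale_right_distrib)
qed

lemma MC_element_NjL_to_cnjl_iff:
  fixes scale :: "'k::field_char_0 \<Rightarrow> 'v::ab_group_add \<Rightarrow> 'v"
  assumes "vector_space scale" and skew: "skew_bilinear scale \<mu>"
    and linear: "Vector_Spaces.linear scale scale P"
  shows "MC_element scale (NjL_to_cnjl \<mu> P) \<longleftrightarrow>
    (\<forall>x y z. jacobiator \<mu> x y z = 0) \<and> (\<forall>a b. nijenhuis_torsion \<mu> P a b = 0)"
proof -
  have elem: "cnjl_elem scale (-1) (NjL_to_cnjl \<mu> P)"
    using vector_space.cnjl_elem_minus_1_iff[OF assms(1)] skew linear by blast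
  note mc = mc_partial_NjL_to_cnjl[OF assms]
  show ?thesis
  proof
    assume "MC_element scale (NjL_to_cnjl \<mu> P)"
    then have eventually_0: "\<exists>N. \<forall>M\<ge>N. mc_partial scale (NjL_to_cnjl \<mu> P) M b (length vs) vs = 0" for b vs
      unfolding MC_element_def by blast
    have vanish: "\<exists>M\<ge>3. mc_partial scale (NjL_to_cnjl \<mu> P) M b (length vs) vs = 0" for b vs
      using eventually_0[of b vs] by (meson max.cobounded1 max.cobounded2)
    have "jacobiator \<mu> x y z = 0" for x y z
    proof -
      obtain M where "3 \<le> M" "mc_partial scale (NjL_to_cnjl \<mu> P) M True 3 [x, y, z] = 0"
        using vanish[of True "[x, y, z]"] by (auto simp: numeral_3_eq_3)
      then show ?thesis by (simp add: mc)
    qed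
    moreover have "nijenhuis_torsion \<mu> P a b = 0" for a b
    proof -
      obtain M where "3 \<le> M" "mc_partial scale (NjL_to_cnjl \<mu> P) M False 2 [a, b] = 0"
        using vanish[of False "[a, b]"] by (auto simp: numeral_2_eq_2)
      then show ?thesis by (simp add: mc)
    qed
    ultimately show "(\<forall>x y z. jacobiator \<mu> x y z = 0) \<and> (\<forall>a b. nijenhuis_torsion \<mu> P a b = 0)"
      by blast
  next
    assume "(\<forall>x y z. jacobiator \<mu> x y z = 0) \<and> (\<forall>a b. nijenhuis_torsion \<mu> P a b = 0)"
    then have "mc_partial scale (NjL_to_cnjl \<mu> P) M b m vs = 0" if "3 \<le> M" for M b m vs
      by (simp add: mc[OF that])
    then show "MC_element scale (NjL_to_cnjl \<mu> P)"
      unfolding MC_element_def using elem by blast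
  qed
qed

lemma lie_bracket_iff:
  fixes scale :: "'k::field_char_0 \<Rightarrow> 'v::ab_group_add \<Rightarrow> 'v"
  assumes "vector_space scale"
  shows "lie_bracket scale \<mu> \<longleftrightarrow> skew_bilinear scale \<mu> \<and> (\<forall>x y z. jacobiator \<mu> x y z = 0)"
proof -
  interpret vector_space scale by fact
  interpret pair: vector_space_pair scale scale ..
  have "(\<forall>x. \<mu> x x = 0) \<longleftrightarrow> (\<forall>x y. \<mu> x y = - \<mu> y x)"
    if left: "\<And>y. Vector_Spaces.linear scale scale (\<lambda>x. \<mu> x y)"
      and right: "\<And>x. Vector_Spaces.linear scale scale (\<mu> x)"
  proof
    assume alternating: "\<forall>x. \<mu> x x = 0"
    show "\<forall>x y. \<mu> x y = - \<mu> y x"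
    proof (intro allI)
      fix x y
      have "0 = \<mu> (x + y) (x + y)"
        using alternating by simp
      also have "\<dots> = \<mu> x x + \<mu> x y + (\<mu> y x + \<mu> y y)"
        by (simp add: pair.linear_add[OF left] pair.linear_add[OF right])
      finally show "\<mu> x y = - \<mu> y x"
        using alternating by (simp add: eq_neg_iff_add_eq_0)
    qed
  next
    assume antisym: "\<forall>x y. \<mu> x y = - \<mu> y x"
    show "\<forall>x. \<mu> x x = 0"
    proof
      fix x
      have "scale 2 (\<mu> x x) = 0"
        using antisym[rule_format, of x x] by (simp add: scale_2 eq_neg_iff_add_eq_0)
      then show "\<mu> x x = 0"
        by simp
    qed
  qed
  then show ?thesis
    unfolding lie_bracket_def skew_bilinear_def jacobiator_def by blast
qed

lemma nijenhuis_lie_iff: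
  fixes scale :: "'k::field_char_0 \<Rightarrow> 'v::ab_group_add \<Rightarrow> 'v"
  assumes "vector_space scale"
  shows "nijenhuis_lie scale \<mu> P \<longleftrightarrow>
    skew_bilinear scale \<mu> \<and> (\<forall>x y z. jacobiator \<mu> x y z = 0) \<and>
    Vector_Spaces.linear scale scale P \<and> (\<forall>a b. nijenhuis_torsion \<mu> P a b = 0)"
  by (simp add: nijenhuis_lie_def lie_bracket_iff[OF assms] nijenhuis_torsion_def conj_assoc)

lemma MC_element_iff_nijenhuis_lie:
  fixes scale :: "'k::field_char_0 \<Rightarrow> 'v::ab_group_add \<Rightarrow> 'v"
  assumes "vector_space scale"
  shows "MC_element scale \<alpha> \<longleftrightarrow> (\<exists>\<mu> P. nijenhuis_lie scale \<mu> P \<and> \<alpha> = NjL_to_cnjl \<mu> P)"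
proof
  assume mc: "MC_element scale \<alpha>"
  then have "cnjl_elem scale (-1) \<alpha>"
    by (simp add: MC_element_def)
  then obtain \<mu> P where skew: "skew_bilinear scale \<mu>" and linear: "Vector_Spaces.linear scale scale P"
    and \<alpha>: "\<alpha> = NjL_to_cnjl \<mu> P"
    using vector_space.cnjl_elem_minus_1_iff[OF assms] by blast
  have "nijenhuis_lie scale \<mu> P"
    using mc skew linear
    by (simp add: \<alpha> MC_element_NjL_to_cnjl_iff[OF assms skew linear] nijenhuis_lie_iff[OF assms])
  with \<alpha> show "\<exists>\<mu> P. nijenhuis_lie scale \<mu> P \<and> \<alpha> = NjL_to_cnjl \<mu> P"
    by blast
next
  assume "\<exists>\<mu> P. nijenhuis_lie scale \<mu> P \<and> \<alpha> = NjL_to_cnjl \<mu> P"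
  then obtain \<mu> P where "nijenhuis_lie scale \<mu> P" and \<alpha>: "\<alpha> = NjL_to_cnjl \<mu> P"
    by blast
  then have skew: "skew_bilinear scale \<mu>" and linear: "Vector_Spaces.linear scale scale P"
    and "(\<forall>x y z. jacobiator \<mu> x y z = 0) \<and> (\<forall>a b. nijenhuis_torsion \<mu> P a b = 0)"
    by (simp_all add: nijenhuis_lie_iff[OF assms])
  then show "MC_element scale \<alpha>"
    by (simp add: \<alpha> MC_element_NjL_to_cnjl_iff[OF assms skew linear])
qed

lemma NjL_to_cnjl_inject: "NjL_to_cnjl \<mu> P = NjL_to_cnjl \<mu>' P' \<longleftrightarrow> \<mu> = \<mu>' \<and> P = P'"
proof
  assume eq: "NjL_to_cnjl \<mu> P = NjL_to_cnjl \<mu>' P'"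
  have "\<mu> x y = \<mu>' x y" for x y
    using arg_cong[OF eq, of "\<lambda>\<alpha>. fst \<alpha> 2 [x, y]"] by (simp add: NjL_to_cnjl_def)
  moreover have "P x = P' x" for x
    using arg_cong[OF eq, of "\<lambda>\<alpha>. snd \<alpha> 1 [x]"] by (simp add: NjL_to_cnjl_def)
  ultimately show "\<mu> = \<mu>' \<and> P = P'"
    by (simp add: fun_eq_iff)
qed simp

theorem proposition9p3:
  fixes scale :: "'k::field_char_0 \<Rightarrow> 'v::ab_group_add \<Rightarrow> 'v"
  assumes "vector_space scale"
  shows "bij_betw (\<lambda>(\<mu>, P). NjL_to_cnjl \<mu> P)
           {(\<mu>, P). nijenhuis_lie scale \<mu> P} {\<alpha>. MC_element scale \<alpha>}"
  unfolding bij_betw_def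
proof
  show "inj_on (\<lambda>(\<mu>, P). NjL_to_cnjl \<mu> P) {(\<mu>, P). nijenhuis_lie scale \<mu> P}"
    by (auto simp: inj_on_def NjL_to_cnjl_inject)
  show "(\<lambda>(\<mu>, P). NjL_to_cnjl \<mu> P) ` {(\<mu>, P). nijenhuis_lie scale \<mu> P} = {\<alpha>. MC_element scale \<alpha>}"
    by (auto simp: MC_element_iff_nijenhuis_lie[OF assms])
qed

end
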